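(* Let $\mathfrak S$ be a commutative Noetherian semiring. Then for every set $\sigma_{\mathfrak S}$ of ideals of $\mathfrak S$, the space $\sigma_{\mathfrak S}$ with the ideal topology is a Noetherian topological space.
   Context: A semiring $(\mathfrak S,+,0,\cdot,1)$ has $(\mathfrak S,+,0)$ a commutative monoid, $(\mathfrak S,\cdot,1)$ a monoid, $0r=r0=0$, and two-sided distributivity; all semirings are commutative. An ideal is a nonempty proper subset closed under addition and under multiplication by elements of $\mathfrak S$. Noetherian semiring: every ideal is finitely generated. For an ideal $\mathfrak a$, $\mathfrak a^{\uparrow}=\{\mathfrak x\in\sigma_{\mathfrak S}\mid\mathfrak a\subseteq\mathfrak x\}$; the ideal topology on $\sigma_{\mathfrak S}$ has the sets $\mathfrak a^{\uparrow}$ ($\mathfrak a$ any ideal) as a subbasis of closed sets. A Noetherian topological space is one satisfying the descending chain condition on closed subsets. *)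

theory Defs
  imports "HOL-Analysis.Analysis"
begin

definition semiring_ideal :: "'a::comm_semiring_1 set \<Rightarrow> bool" where
  "semiring_ideal I \<longleftrightarrow> I \<noteq> {} \<and> I \<noteq> UNIV
     \<and> (\<forall>x\<in>I. \<forall>y\<in>I. x + y \<in> I)
     \<and> (\<forall>r x. x \<in> I \<longrightarrow> r * x \<in> I)"

definition gen_ideal :: "'a::comm_semiring_1 set \<Rightarrow> 'a set" where
  "gen_ideal F = {(\<Sum>f\<in>F. r f * f) | r. True}"

definition finitely_generated_ideal :: "'a::comm_semiring_1 set \<Rightarrow> bool" where
  "finitely_generated_ideal I \<longleftrightarrow> (\<exists>F. finite F \<and> F \<subseteq> I \<and> I = gen_ideal F)"

definition noetherian_semiring :: "'a::comm_semiring_1 itself \<Rightarrow> bool" where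
  "noetherian_semiring TYPE('a) \<longleftrightarrow>
     (\<forall>I :: 'a set. semiring_ideal I \<longrightarrow> finitely_generated_ideal I)"

definition up_set :: "'a set set \<Rightarrow> 'a set \<Rightarrow> 'a set set" where
  "up_set \<sigma> a = {x \<in> \<sigma>. a \<subseteq> x}"

text \<open>Ideal topology on \<sigma>: the sets \<open>a\<up>\<close> (a any ideal) form a subbasis of
  closed sets; equivalently their complements in \<sigma> (together with \<sigma>)
  form a subbasis of open sets.\<close>
definition ideal_topology :: "'a::comm_semiring_1 set set \<Rightarrow> 'a set topology" where
  "ideal_topology \<sigma> =
     topology_generated_by (insert \<sigma> {\<sigma> - up_set \<sigma> a | a. semiring_ideal a})"

definition noetherian_space :: "'a topology \<Rightarrow> bool" where
  "noetherian_space X \<longleftrightarrow>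
     (\<forall>C :: nat \<Rightarrow> 'a set. (\<forall>n. closedin X (C n)) \<and> (\<forall>n. C (Suc n) \<subseteq> C n)
        \<longrightarrow> (\<exists>N. \<forall>n\<ge>N. C n = C N))"

end

theory Submission
  imports Defs "HOL-Library.Multiset"
begin

text \<open>Each set \<open>a\<up>\<close> is recovered from the ideal \<open>\<Inter>(a\<up>)\<close> as \<open>(\<Inter>(a\<up>))\<up>\<close>, so a
  strictly descending chain of such sets gives a strictly ascending chain of ideals, which cannot
  exist in a Noetherian semiring. The sets \<open>a\<up>\<close> are closed under intersection, and the multiset
  ordering shows that the descending chain condition passes to their finite unions. That chain
  condition in turn makes finite unions closed under arbitrary intersections, so every closed set
  of the ideal topology is such a finite union.\<close>

lemma wf_on_psubset_iff_decseq_stable: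
  fixes \<C> :: "'b set set"
  shows "wf_on \<C> {(X, Y). X \<subset> Y} \<longleftrightarrow>
     (\<forall>C. range C \<subseteq> \<C> \<longrightarrow> decseq C \<longrightarrow> (\<exists>N. \<forall>n\<ge>N. C n = C N))"
proof (intro iffI allI impI)
  fix C :: "nat \<Rightarrow> 'b set"
  assume wf: "wf_on \<C> {(X, Y). X \<subset> Y}" and C: "range C \<subseteq> \<C>" "decseq C"
  have "\<exists>N. \<forall>Y\<subset>C N. Y \<notin> range C"
    using wf_on_iff_ex_minimal[THEN iffD1, OF wf, rule_format, OF C(1)] by simp
  then obtain N where "\<forall>Y\<subset>C N. Y \<notin> range C" ..
  then have min: "\<not> C n \<subset> C N" for n using rangeI[of C n] by blast
  show "\<exists>N. \<forall>n\<ge>N. C n = C N"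
  proof (rule exI[of _ N], intro allI impI)
    fix n assume "N \<le> n"
    then show "C n = C N" using min[of n] decseqD[OF C(2)] by (metis psubsetI)
  qed
next
  assume stable: "\<forall>C. range C \<subseteq> \<C> \<longrightarrow> decseq C \<longrightarrow> (\<exists>N. \<forall>n\<ge>N. C n = C N)"
  show "wf_on \<C> {(X, Y). X \<subset> Y}"
    unfolding wf_on_iff_wf[of \<C>] wf_iff_no_infinite_down_chain
  proof
    assume "\<exists>C. \<forall>i. (C (Suc i), C i) \<in> {(x, y) \<in> {(X, Y). X \<subset> Y}. x \<in> \<C> \<and> y \<in> \<C>}"
    then obtain C where "\<forall>i. (C (Suc i), C i) \<in> {(x, y) \<in> {(X, Y). X \<subset> Y}. x \<in> \<C> \<and> y \<in> \<C>}" ..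
    then have C: "C (Suc i) \<subset> C i" "C i \<in> \<C>" for i by auto
    have "range C \<subseteq> \<C>" using C(2) by auto
    moreover have "decseq C" using C(1) by (intro decseq_SucI) (simp add: less_imp_le)
    ultimately have "\<exists>N. \<forall>n\<ge>N. C n = C N" by (rule stable[rule_format])
    then obtain N where N: "\<forall>n\<ge>N. C n = C N" ..
    have "C (Suc N) = C N" using N[rule_format, of "Suc N"] by simp
    then show False using C(1)[of N] by simp
  qed
qed

definition finite_unions :: "'b set set \<Rightarrow> 'b set set" where
  "finite_unions \<B> = {\<Union>\<A> | \<A>. finite \<A> \<and> \<A> \<subseteq> \<B>}"

lemma finite_unions_Un:
  assumes "X \<in> finite_unions \<B>" "Y \<in> finite_unions \<B>"
  shows "X \<union> Y \<in> finite_unions \<B>"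
proof -
  obtain \<A> \<A>' where "finite \<A>" "\<A> \<subseteq> \<B>" "X = \<Union>\<A>" "finite \<A>'" "\<A>' \<subseteq> \<B>" "Y = \<Union>\<A>'"
    using assms unfolding finite_unions_def by blast
  then have "finite (\<A> \<union> \<A>')" "\<A> \<union> \<A>' \<subseteq> \<B>" "X \<union> Y = \<Union>(\<A> \<union> \<A>')" by auto
  then show ?thesis unfolding finite_unions_def by blast
qed

lemma finite_unions_Int:
  assumes Int: "\<And>X Y. X \<in> \<B> \<Longrightarrow> Y \<in> \<B> \<Longrightarrow> X \<inter> Y \<in> \<B>"
    and "X \<in> finite_unions \<B>" "Y \<in> finite_unions \<B>"
  shows "X \<inter> Y \<in> finite_unions \<B>"
proof -
  obtain \<A> \<A>' where A: "finite \<A>" "\<A> \<subseteq> \<B>" "X = \<Union>\<A>" "finite \<A>'" "\<A>' \<subseteq> \<B>" "Y = \<Union>\<A>'"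
    using assms(2,3) unfolding finite_unions_def by blast
  let ?\<P> = "{A \<inter> A' | A A'. A \<in> \<A> \<and> A' \<in> \<A>'}"
  have "finite ?\<P>"
    using finite_image_set2[of "\<lambda>A. A \<in> \<A>" "\<lambda>A'. A' \<in> \<A>'" "(\<inter>)"] A by simp
  moreover have "?\<P> \<subseteq> \<B>" using A Int by blast
  moreover have "X \<inter> Y = \<Union>?\<P>" using A by blast
  ultimately show ?thesis unfolding finite_unions_def by blast
qed

text \<open>\<open>M'\<close> arises from \<open>M\<close> by replacing each member not contained in \<open>\<Union>K\<close> with its
  (strictly smaller) intersections with the members of \<open>K\<close>.\<close>
lemma finite_union_psubset_mult:
  fixes M :: "'b set multiset"
  assumes Int: "\<And>X Y. X \<in> \<B> \<Longrightarrow> Y \<in> \<B> \<Longrightarrow> X \<inter> Y \<in> \<B>"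
    and M: "set_mset M \<subseteq> \<B>" and K: "finite K" "K \<subseteq> \<B>" and psub: "\<Union>K \<subset> \<Union>(set_mset M)"
  obtains M' where "set_mset M' \<subseteq> \<B>" "\<Union>(set_mset M') = \<Union>K"
    "(M', M) \<in> mult {(X, Y). X \<subset> Y \<and> X \<in> \<B> \<and> Y \<in> \<B>}"
proof
  define I where "I = filter_mset (\<lambda>X. X \<subseteq> \<Union>K) M"
  define J where "J = filter_mset (\<lambda>X. \<not> X \<subseteq> \<Union>K) M"
  define L where "L = {X \<inter> C | X C. X \<in># J \<and> C \<in> K}"
  have "finite L"
    unfolding L_def using finite_image_set2[of "\<lambda>X. X \<in># J" "\<lambda>C. C \<in> K" "(\<inter>)"] K(1) by simp
  then have set_L: "set_mset (mset_set L) = L" by simp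
  have J: "X \<in> \<B>" "\<not> X \<subseteq> \<Union>K" if "X \<in># J" for X
    using that M unfolding J_def by auto
  have L: "\<exists>X\<in>#J. (Z, X) \<in> {(X, Y). X \<subset> Y \<and> X \<in> \<B> \<and> Y \<in> \<B>}" if "Z \<in> L" for Z
  proof -
    obtain X C where Z: "Z = X \<inter> C" "X \<in># J" "C \<in> K" using \<open>Z \<in> L\<close> unfolding L_def by blast
    then have "Z \<subset> X" using J(2) by blast
    moreover have "Z \<in> \<B>" using Z J(1) K(2) Int by blast
    ultimately show ?thesis using Z(2) J(1) by blast
  qed
  have "J \<noteq> {#}"
    using psub unfolding J_def by auto
  moreover have "\<forall>Z\<in>set_mset (mset_set L). \<exists>X\<in>#J. (Z, X) \<in> {(X, Y). X \<subset> Y \<and> X \<in> \<B> \<and> Y \<in> \<B>}"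
    using L unfolding set_L by blast
  ultimately have "(I + mset_set L, I + J) \<in> mult {(X, Y). X \<subset> Y \<and> X \<in> \<B> \<and> Y \<in> \<B>}"
    by (rule one_step_implies_mult)
  moreover have "M = I + J" unfolding I_def J_def by (rule multiset_partition)
  ultimately show "(I + mset_set L, M) \<in> mult {(X, Y). X \<subset> Y \<and> X \<in> \<B> \<and> Y \<in> \<B>}"
    by simp
  have "set_mset I \<subseteq> \<B>" using M unfolding I_def by auto
  moreover have "L \<subseteq> \<B>" using L by blast
  ultimately show "set_mset (I + mset_set L) \<subseteq> \<B>" unfolding set_mset_union set_L by blast
  have "\<Union>(set_mset I) \<subseteq> \<Union>K" unfolding I_def by auto
  moreover have "\<Union>L \<subseteq> \<Union>K" using K unfolding L_def by blast
  moreover have "\<Union>K \<subseteq> \<Union>(set_mset I) \<union> \<Union>L"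
  proof
    fix u assume u: "u \<in> \<Union>K"
    then obtain X C where X: "X \<in># M" "u \<in> X" and C: "C \<in> K" "u \<in> C" using psub by blast
    show "u \<in> \<Union>(set_mset I) \<union> \<Union>L"
    proof (cases "X \<subseteq> \<Union>K")
      case True
      then show ?thesis using X unfolding I_def by auto
    next
      case False
      then have "X \<inter> C \<in> L" using X C unfolding L_def J_def by auto
      then show ?thesis using X C by blast
    qed
  qed
  ultimately show "\<Union>(set_mset (I + mset_set L)) = \<Union>K" unfolding set_mset_union set_L by blast
qed

lemma wf_on_finite_unions:
  assumes Int: "\<And>X Y. X \<in> \<B> \<Longrightarrow> Y \<in> \<B> \<Longrightarrow> X \<inter> Y \<in> \<B>"
    and wf: "wf_on \<B> {(X, Y). X \<subset> Y}"
  shows "wf_on (finite_unions \<B>) {(X, Y). X \<subset> Y}"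
  unfolding wf_on_iff_ex_minimal
proof (intro allI impI)
  fix \<S> assume \<S>: "\<S> \<subseteq> finite_unions \<B>" "\<S> \<noteq> {}"
  let ?R = "{(X, Y). X \<subset> Y \<and> X \<in> \<B> \<and> Y \<in> \<B>}"
  have "wf (mult ?R)"
    using wf unfolding wf_on_iff_wf[of \<B>] by (intro wf_mult) (simp add: conj_commute)
  moreover obtain A where "finite A" "A \<subseteq> \<B>" "\<Union>A \<in> \<S>"
    using \<S> unfolding finite_unions_def by blast
  then have "mset_set A \<in> {M. set_mset M \<subseteq> \<B> \<and> \<Union>(set_mset M) \<in> \<S>}" by simp
  ultimately obtain M where M: "set_mset M \<subseteq> \<B>" "\<Union>(set_mset M) \<in> \<S>"
    and min: "\<And>M'. (M', M) \<in> mult ?R \<Longrightarrow> \<not> (set_mset M' \<subseteq> \<B> \<and> \<Union>(set_mset M') \<in> \<S>)"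
    by (rule wfE_min) blast
  have "Y \<notin> \<S>" if "Y \<subset> \<Union>(set_mset M)" for Y
  proof
    assume "Y \<in> \<S>"
    then obtain K where K: "finite K" "K \<subseteq> \<B>" "Y = \<Union>K"
      using \<S>(1) unfolding finite_unions_def by blast
    have psub: "\<Union>K \<subset> \<Union>(set_mset M)" using that K(3) by simp
    obtain M' where M': "set_mset M' \<subseteq> \<B>" "\<Union>(set_mset M') = \<Union>K" "(M', M) \<in> mult ?R"
      by (rule finite_union_psubset_mult[OF Int M(1) K(1,2) psub])
    show False using min[OF M'(3)] M'(1,2) K(3) \<open>Y \<in> \<S>\<close> by simp
  qed
  then show "\<exists>Z\<in>\<S>. \<forall>Y. (Y, Z) \<in> {(X, Y). X \<subset> Y} \<longrightarrow> Y \<notin> \<S>"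
    using M(2) by blast
qed

lemma Inter_mem_if_wf_on_psubset:
  assumes wf: "wf_on \<C> {(X, Y). X \<subset> Y}"
    and Int: "\<And>X Y. X \<in> \<C> \<Longrightarrow> Y \<in> \<C> \<Longrightarrow> X \<inter> Y \<in> \<C>"
    and "\<A> \<subseteq> \<C>" "\<A> \<noteq> {}"
  shows "\<Inter>\<A> \<in> \<C>"
proof -
  have upper: "{Y \<in> \<C>. \<Inter>\<A> \<subseteq> Y} \<subseteq> \<C>" "{Y \<in> \<C>. \<Inter>\<A> \<subseteq> Y} \<noteq> {}"
    using assms(3,4) by auto
  have "\<exists>Z. (Z \<in> \<C> \<and> \<Inter>\<A> \<subseteq> Z) \<and> (\<forall>Y\<subset>Z. \<not> (Y \<in> \<C> \<and> \<Inter>\<A> \<subseteq> Y))"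
    using wf_on_iff_ex_minimal[THEN iffD1, OF wf, rule_format, OF upper] by simp
  then obtain Z where Z: "Z \<in> \<C>" "\<Inter>\<A> \<subseteq> Z" and min: "\<forall>Y\<subset>Z. \<not> (Y \<in> \<C> \<and> \<Inter>\<A> \<subseteq> Y)"
    by blast
  have "Z \<subseteq> A" if "A \<in> \<A>" for A
  proof -
    have "Z \<inter> A \<in> \<C>" using Int[OF Z(1)] that assms(3) by blast
    moreover have "\<Inter>\<A> \<subseteq> Z \<inter> A" using Z(2) that by blast
    ultimately have "\<not> Z \<inter> A \<subset> Z" using min by blast
    then show ?thesis by blast
  qed
  then have "Z = \<Inter>\<A>" using Z(2) by blast
  then show ?thesis using Z(1) by simp
qed

lemma closedin_topology_generated_by_mem:
  assumes "X \<in> \<S>" "\<And>S. S \<in> \<S> \<Longrightarrow> S \<subseteq> X"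
    and basis: "\<And>S. S \<in> \<S> \<Longrightarrow> X - S \<in> \<C>"
    and top: "X \<in> \<C>"
    and Un: "\<And>A B. A \<in> \<C> \<Longrightarrow> B \<in> \<C> \<Longrightarrow> A \<union> B \<in> \<C>"
    and Inter: "\<And>\<A>. \<A> \<subseteq> \<C> \<Longrightarrow> \<A> \<noteq> {} \<Longrightarrow> \<Inter>\<A> \<in> \<C>"
    and closed: "closedin (topology_generated_by \<S>) C"
  shows "C \<in> \<C>"
proof -
  have "X - U \<in> \<C>" if "generate_topology_on \<S> U" for U
    using that
  proof (induction rule: generate_topology_on.induct)
    case Empty
    show ?case using top by simp
  next
    case (Int A B)
    then show ?case using Un[of "X - A" "X - B"] by (simp add: Diff_Int)
  next
    case (UN K)
    show ?case
    proof (cases "K = {}")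
      case True
      then show ?thesis using top by simp
    next
      case False
      then have "X - \<Union>K = \<Inter>((\<lambda>k. X - k) ` K)" by blast
      then show ?thesis using Inter[of "(\<lambda>k. X - k) ` K"] UN.IH False by auto
    qed
  qed (rule basis)
  moreover have "topspace (topology_generated_by \<S>) = X" using assms(1,2) by auto
  ultimately show ?thesis
    using closed unfolding closedin_def openin_topology_generated_by_iff by (metis double_diff order_refl)
qed

lemma semiring_ideal_zero: "semiring_ideal I \<Longrightarrow> 0 \<in> I"
  unfolding semiring_ideal_def by (metis all_not_in_conv mult_zero_left)

lemma one_notin_semiring_ideal: "semiring_ideal I \<Longrightarrow> 1 \<notin> I"
  unfolding semiring_ideal_def by (metis UNIV_eq_I mult.right_neutral)

lemma semiring_ideal_sum:
  assumes "semiring_ideal I" "\<And>x. x \<in> A \<Longrightarrow> g x \<in> I"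
  shows "(\<Sum>x\<in>A. g x) \<in> I"
  using assms(2)
proof (induction A rule: infinite_finite_induct)
  case (insert x A)
  then show ?case using assms(1) unfolding semiring_ideal_def by simp
qed (use assms(1) semiring_ideal_zero in auto)

lemma gen_ideal_subset:
  assumes "semiring_ideal I" "F \<subseteq> I"
  shows "gen_ideal F \<subseteq> I"
proof
  fix y assume "y \<in> gen_ideal F"
  then obtain r where "y = (\<Sum>f\<in>F. r f * f)" unfolding gen_ideal_def by blast
  moreover have "r f * f \<in> I" if "f \<in> F" for f
    using assms that unfolding semiring_ideal_def by blast
  ultimately show "y \<in> I" using semiring_ideal_sum[OF assms(1), of F "\<lambda>f. r f * f"] by simp
qed

lemma semiring_ideal_Inter:
  assumes "\<A> \<noteq> {}" "\<And>I. I \<in> \<A> \<Longrightarrow> semiring_ideal I"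
  shows "semiring_ideal (\<Inter>\<A>)"
  unfolding semiring_ideal_def
proof (intro conjI ballI allI impI)
  show "\<Inter>\<A> \<noteq> {}" using assms semiring_ideal_zero by blast
  show "\<Inter>\<A> \<noteq> UNIV" using assms one_notin_semiring_ideal by blast
qed (use assms(2) in \<open>auto simp: semiring_ideal_def\<close>)

lemma semiring_ideal_UN_incseq:
  assumes "incseq I" "\<And>n. semiring_ideal (I n)"
  shows "semiring_ideal (\<Union>n. I n)"
  unfolding semiring_ideal_def
proof (intro conjI ballI allI impI)
  show "(\<Union>n. I n) \<noteq> {}" using semiring_ideal_zero[OF assms(2)] by blast
  show "(\<Union>n. I n) \<noteq> UNIV" using one_notin_semiring_ideal[OF assms(2)] by blast
next
  fix x y assume "x \<in> (\<Union>n. I n)" "y \<in> (\<Union>n. I n)"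
  then obtain i j where "x \<in> I i" "y \<in> I j" by blast
  then have "x \<in> I (max i j)" "y \<in> I (max i j)"
    using incseqD[OF assms(1), of i "max i j"] incseqD[OF assms(1), of j "max i j"] by auto
  then have "x + y \<in> I (max i j)" using assms(2) unfolding semiring_ideal_def by blast
  then show "x + y \<in> (\<Union>n. I n)" by blast
next
  fix r x assume "x \<in> (\<Union>n. I n)"
  then obtain i where "x \<in> I i" by blast
  then have "r * x \<in> I i" using assms(2) unfolding semiring_ideal_def by blast
  then show "r * x \<in> (\<Union>n. I n)" by blast
qed

lemma noetherian_semiring_incseq_stable:
  assumes "noetherian_semiring TYPE('a::comm_semiring_1)"
    and "incseq I" and "\<And>n. semiring_ideal (I n :: 'a set)"
  shows "\<exists>N. \<forall>n\<ge>N. I n = I N"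
proof -
  have "finitely_generated_ideal (\<Union>n. I n)"
    using assms(1) semiring_ideal_UN_incseq[OF assms(2,3)] unfolding noetherian_semiring_def by simp
  then obtain F where F: "finite F" "F \<subseteq> (\<Union>n. I n)" "(\<Union>n. I n) = gen_ideal F"
    unfolding finitely_generated_ideal_def by metis
  then have "\<forall>f\<in>F. \<exists>n. f \<in> I n" by blast
  then obtain m where m: "\<And>f. f \<in> F \<Longrightarrow> f \<in> I (m f)" by metis
  define N where "N = Max (m ` F)"
  have "F \<subseteq> I N"
  proof
    fix f assume "f \<in> F"
    then have "m f \<le> N" unfolding N_def using F(1) by (simp add: Max_ge)
    then show "f \<in> I N" using m[OF \<open>f \<in> F\<close>] incseqD[OF assms(2)] by blast
  qed
  then have "(\<Union>n. I n) \<subseteq> I N" unfolding F(3) by (rule gen_ideal_subset[OF assms(3)])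
  then have "I n = I N" if "n \<ge> N" for n using incseqD[OF assms(2) that] by auto
  then show ?thesis by blast
qed

lemma up_set_Int: "up_set \<sigma> a \<inter> up_set \<sigma> b = up_set \<sigma> (a \<union> b)"
  unfolding up_set_def by blast

lemma up_set_Inter_up_set: "up_set \<sigma> (\<Inter>(up_set \<sigma> a)) = up_set \<sigma> a"
  unfolding up_set_def by blast

lemma up_set_decseq_stable:
  fixes \<sigma> :: "'a::comm_semiring_1 set set"
  assumes "noetherian_semiring TYPE('a)" and "\<forall>I\<in>\<sigma>. semiring_ideal I"
    and "range X \<subseteq> range (up_set \<sigma>)" and "decseq X"
  shows "\<exists>N. \<forall>n\<ge>N. X n = X N"
proof (cases "\<exists>N. X N = {}")
  case True
  then show ?thesis using decseqD[OF assms(4)] by blast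
next
  case False
  have "X n \<subseteq> \<sigma>" for n
    using assms(3) unfolding up_set_def by blast
  then have "semiring_ideal (\<Inter>(X n))" for n
    using False assms(2) by (intro semiring_ideal_Inter) auto
  moreover have "incseq (\<lambda>n. \<Inter>(X n))"
    by (intro incseq_SucI Inter_anti_mono decseqD[OF assms(4)]) simp
  ultimately obtain N where "\<forall>n\<ge>N. \<Inter>(X n) = \<Inter>(X N)"
    using noetherian_semiring_incseq_stable[OF assms(1)] by blast
  moreover have "X n = up_set \<sigma> (\<Inter>(X n))" for n
  proof -
    obtain a where "X n = up_set \<sigma> a" using assms(3) by blast
    then show ?thesis using up_set_Inter_up_set by metis
  qed
  ultimately show ?thesis by metis
qed

lemma closedin_ideal_topology_finite_unions:
  fixes \<sigma> :: "'a::comm_semiring_1 set set"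
  assumes wf: "wf_on (finite_unions (range (up_set \<sigma>))) {(X, Y). X \<subset> Y}"
    and closed: "closedin (ideal_topology \<sigma>) C"
  shows "C \<in> finite_unions (range (up_set \<sigma>))"
proof -
  let ?\<C> = "finite_unions (range (up_set \<sigma>))"
  have up_set: "up_set \<sigma> a \<in> ?\<C>" for a
    unfolding finite_unions_def by (rule CollectI, rule exI[of _ "{up_set \<sigma> a}"]) simp
  have "A \<inter> B \<in> range (up_set \<sigma>)" if "A \<in> range (up_set \<sigma>)" "B \<in> range (up_set \<sigma>)" for A B
    using that by (auto simp: up_set_Int)
  then have Int: "A \<inter> B \<in> ?\<C>" if "A \<in> ?\<C>" "B \<in> ?\<C>" for A B
    using finite_unions_Int that by blast
  show ?thesis
  proof (rule closedin_topology_generated_by_mem[where X = \<sigma> and \<C> = ?\<C>])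
    show "closedin (topology_generated_by (insert \<sigma> {\<sigma> - up_set \<sigma> a | a. semiring_ideal a})) C"
      using closed unfolding ideal_topology_def .
    show "S \<subseteq> \<sigma>" if "S \<in> insert \<sigma> {\<sigma> - up_set \<sigma> a | a. semiring_ideal a}" for S
      using that by blast
    have "\<sigma> = up_set \<sigma> {}" unfolding up_set_def by simp
    then show "\<sigma> \<in> ?\<C>" using up_set by metis
    moreover have "\<sigma> - (\<sigma> - up_set \<sigma> a) = up_set \<sigma> a" for a unfolding up_set_def by blast
    moreover have "{} \<in> ?\<C>"
      unfolding finite_unions_def by (rule CollectI, rule exI[of _ "{}"]) simp
    ultimately show "\<sigma> - S \<in> ?\<C>" if "S \<in> insert \<sigma> {\<sigma> - up_set \<sigma> a | a. semiring_ideal a}" for S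
      using that up_set by auto
    show "\<Inter>\<A> \<in> ?\<C>" if "\<A> \<subseteq> ?\<C>" "\<A> \<noteq> {}" for \<A>
      using Inter_mem_if_wf_on_psubset[OF wf Int that] .
  qed (auto intro: finite_unions_Un)
qed

theorem corollary3p8:
  fixes \<sigma> :: "'a::comm_semiring_1 set set"
  assumes "noetherian_semiring TYPE('a)"
    and "\<forall>I\<in>\<sigma>. semiring_ideal I"
  shows "noetherian_space (ideal_topology \<sigma>)"
proof -
  let ?\<C> = "finite_unions (range (up_set \<sigma>))"
  have "wf_on (range (up_set \<sigma>)) {(X, Y). X \<subset> Y}"
    unfolding wf_on_psubset_iff_decseq_stable by (intro allI impI up_set_decseq_stable[OF assms])
  then have wf: "wf_on ?\<C> {(X, Y). X \<subset> Y}"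
    by (rule wf_on_finite_unions[rotated]) (auto simp: up_set_Int)
  show ?thesis
    unfolding noetherian_space_def
  proof (intro allI impI)
    fix C :: "nat \<Rightarrow> 'a set set"
    assume C: "(\<forall>n. closedin (ideal_topology \<sigma>) (C n)) \<and> (\<forall>n. C (Suc n) \<subseteq> C n)"
    then have "range C \<subseteq> ?\<C>" using closedin_ideal_topology_finite_unions[OF wf] by blast
    moreover have "decseq C" using C by (intro decseq_SucI) blast
    ultimately show "\<exists>N. \<forall>n\<ge>N. C n = C N"
      by (rule wf[unfolded wf_on_psubset_iff_decseq_stable, rule_format])
  qed
qed

end
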